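(* Let $n\ge1$, $d\ge1$, $F_1,\dots,F_n:\mathbb{R}^d\to\mathbb{R}^d$, $F=\frac1n\sum_iF_i$, with $F$ $\mu$-strongly monotone ($\mu>0$) and each $F_i$ $L_i$-Lipschitz; let $z_*$ be the solution of $F(z_* )=0$, $L_{max}=\max_iL_i$, $\sigma_*^2=\frac1n\sum_i\|F_i(z_* )\|^2$, and $\gamma_{1,max}=\frac{\mu}{10L_{max}^2\sqrt{10n^2+2n+54}}$. Run SEG-RR (defined in the context) with epoch-dependent step sizes $\gamma_{2,k}=2\gamma_{1,k}$, where $\gamma_{1,k}=\gamma_{1,max}$ for $k<k^*:=\lceil\frac{64}{\mu^2\gamma_{1,max}^2}\rceil$ and $\gamma_{1,k}=\frac{4(2k+1)}{\mu(k+1)^2}$ for $k\ge k^*$. Then for $K\ge k^*$, $$\mathbb{E}\|z_0^{K+1}-z_*\|^2\le\frac{(k^* )^2e^{-\frac{\mu n\gamma_{1,max}}{4}}}{(K+1)^2}\|z_0-z_*\|^2+\frac{96L_{max}^2(29+n)\sigma_*^2}{\mu^2(K+1)^2}\Big(\gamma_{1,max}^2(k^* )^2+\frac{128}{\mu^2}K\Big).$$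
   Context: $\mu$-strongly monotone: $\langle F(z_1)-F(z_2),z_1-z_2\rangle\ge\mu\|z_1-z_2\|^2$. SEG-RR with epoch step sizes $\gamma_{1,k},\gamma_{2,k}>0$: set $z_0^0=z_0$; for each epoch $k=0,1,\dots$ draw a permutation $\pi^k$ of $\{1,\dots,n\}$ uniformly at random, independently of the past; for $i=0,\dots,n-1$ set $\bar z_i^k=z_i^k-\gamma_{2,k}F_{\pi_i^k}(z_i^k)$, $z_{i+1}^k=z_i^k-\gamma_{1,k}F_{\pi_i^k}(\bar z_i^k)$; then $z_0^{k+1}=z_n^k$. $\mathbb{E}$ is expectation over all permutations. *)

theory Defs
  imports "HOL-Analysis.Analysis" "HOL-Combinatorics.Permutations"
begin

text \<open>Operators are indexed by 0..n-1; a permutation of the operator indices is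
a function p with p permutes {..<n}.\<close>

fun seg_inner :: "(nat \<Rightarrow> 'a::real_normed_vector \<Rightarrow> 'a) \<Rightarrow> real \<Rightarrow> real \<Rightarrow> (nat \<Rightarrow> nat) \<Rightarrow> 'a \<Rightarrow> nat \<Rightarrow> 'a" where
  "seg_inner Fs g1 g2 p z 0 = z"
| "seg_inner Fs g1 g2 p z (Suc i) =
     (let zi = seg_inner Fs g1 g2 p z i;
          zb = zi - g2 *\<^sub>R Fs (p i) zi
      in zi - g1 *\<^sub>R Fs (p i) zb)"

text \<open>Start point of epoch k (z_0^k), given the permutations ps k of each epoch
and step sizes g1 k, g2 k.\<close>
fun seg_rr :: "nat \<Rightarrow> (nat \<Rightarrow> 'a::real_normed_vector \<Rightarrow> 'a) \<Rightarrow> (nat \<Rightarrow> real) \<Rightarrow> (nat \<Rightarrow> real)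
     \<Rightarrow> (nat \<Rightarrow> nat \<Rightarrow> nat) \<Rightarrow> 'a \<Rightarrow> nat \<Rightarrow> 'a" where
  "seg_rr n Fs g1 g2 ps z0 0 = z0"
| "seg_rr n Fs g1 g2 ps z0 (Suc k) = seg_inner Fs (g1 k) (g2 k) (ps k) (seg_rr n Fs g1 g2 ps z0 k) n"

text \<open>Expectation of a function of the permutations of epochs 0..K, where these
are independent and uniform over the permutations of {..<n}: uniform average over
the finite product set.\<close>
definition perm_seqs :: "nat \<Rightarrow> nat \<Rightarrow> (nat \<Rightarrow> nat \<Rightarrow> nat) set" where
  "perm_seqs n K = {..K} \<rightarrow>\<^sub>E {p. p permutes {..<n}}"

definition expect_perms :: "nat \<Rightarrow> nat \<Rightarrow> ((nat \<Rightarrow> nat \<Rightarrow> nat) \<Rightarrow> real) \<Rightarrow> real" where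
  "expect_perms n K X = (\<Sum>ps\<in>perm_seqs n K. X ps) / real (card (perm_seqs n K))"

end

theory Submission
  imports Defs
begin

text \<open>With \<open>\<gamma>\<^sub>2 = 2\<gamma>\<^sub>1 = 2\<gamma>\<close>, one epoch of SEG-RR started at \<open>w\<close> is the deterministic
  step \<open>w - n\<gamma> F w\<close>, which contracts \<open>\<parallel>w - z\<^sub>*\<parallel>\<close> by a factor \<open>1 - \<mu>n\<gamma>/2\<close>, up to an
  error of order \<open>\<gamma>\<^sup>2\<close>. That error is governed by the prefix sums of the vectors
  \<open>F\<^sub>i(z\<^sub>*)\<close>, taken in the order of the epoch's permutation. Since these vectors sum to
  zero, distinct positions of a uniform permutation are negatively correlated (sampling
  without replacement), so the mean square of a prefix of length \<open>i\<close> is at most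
  \<open>i \<sigma>\<^sub>*\<^sup>2\<close>. Squaring and averaging gives the recursion
  \<open>a\<^sub>k\<^sub>+\<^sub>1 \<le> (1 - \<mu>n\<gamma>\<^sub>k/4) a\<^sub>k + 24n(29+n) L\<^sup>2 \<sigma>\<^sub>*\<^sup>2 \<gamma>\<^sub>k\<^sup>3/\<mu>\<close> for
  \<open>a\<^sub>k = E\<parallel>z\<^sub>0\<^sup>k - z\<^sub>*\<parallel>\<^sup>2\<close>. It is geometric while the step is constant, and after
  multiplication by \<open>(k+1)\<^sup>2\<close> it telescopes once the step decreases like \<open>8/(\<mu>k)\<close>.\<close>

section \<open>Averages over a uniformly random permutation\<close>

abbreviation perms :: "'a set \<Rightarrow> ('a \<Rightarrow> 'a) set" where
  "perms A \<equiv> {p. p permutes A}"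

lemma sum_permutes_comp:
  "p permutes A \<Longrightarrow> (\<Sum>a\<in>A. f (p a)) = sum f A"
  using sum.permute[of p A f] by (simp add: comp_def)

lemma sum_perms_apply:
  fixes f :: "'a \<Rightarrow> real"
  assumes "finite A" "j \<in> A"
  shows "(\<Sum>p\<in>perms A. f (p j)) = real (card (perms A)) * (\<Sum>a\<in>A. f a) / real (card A)"
proof -
  define C where "C i = (\<Sum>p\<in>perms A. f (p i))" for i
  have C_eq: "C i = C j" if "i \<in> A" for i
  proof -
    have "C i = (\<Sum>p\<in>perms A. f ((p \<circ> Transposition.transpose j i) i))"
      unfolding C_def by (rule sum_permutations_compose_right[OF permutes_swap_id[OF assms(2) that]])
    then show ?thesis by (simp add: C_def)
  qed
  have "(\<Sum>i\<in>A. C i) = (\<Sum>p\<in>perms A. \<Sum>i\<in>A. f (p i))"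
    unfolding C_def by (rule sum.swap)
  also have "\<dots> = (\<Sum>p\<in>perms A. \<Sum>a\<in>A. f a)"
  proof (rule sum.cong)
    fix p assume "p \<in> perms A"
    then show "(\<Sum>i\<in>A. f (p i)) = (\<Sum>a\<in>A. f a)"
      by (intro sum_permutes_comp) simp
  qed simp
  also have "\<dots> = real (card (perms A)) * (\<Sum>a\<in>A. f a)"
    by simp
  finally have "(\<Sum>i\<in>A. C i) = real (card (perms A)) * (\<Sum>a\<in>A. f a)" .
  moreover have "(\<Sum>i\<in>A. C i) = real (card A) * C j"
    using sum.cong[OF refl C_eq, of A] by simp
  ultimately have "real (card A) * C j = real (card (perms A)) * (\<Sum>a\<in>A. f a)"
    by simp
  moreover have "card A > 0"
    using assms card_gt_0_iff by blast
  ultimately show ?thesis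
    by (simp add: C_def field_simps)
qed

lemma sum_perms_inner_nonpos:
  fixes v :: "'a \<Rightarrow> 'b::real_inner"
  assumes "finite A" "j \<in> A" "k \<in> A" "j \<noteq> k" and sum_v: "(\<Sum>a\<in>A. v a) = 0"
  shows "(\<Sum>p\<in>perms A. inner (v (p j)) (v (p k))) \<le> 0"
proof -
  define C where "C i = (\<Sum>p\<in>perms A. inner (v (p j)) (v (p i)))" for i
  have C_eq: "C i = C k" if "i \<in> A" "i \<noteq> j" for i
  proof -
    have "C i = (\<Sum>p\<in>perms A. inner (v ((p \<circ> Transposition.transpose k i) j))
        (v ((p \<circ> Transposition.transpose k i) i)))"
      unfolding C_def by (rule sum_permutations_compose_right[OF permutes_swap_id[OF assms(3) that(1)]])
    then show ?thesis using that assms(4) by (simp add: C_def transpose_def)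
  qed
  have "(\<Sum>i\<in>A. C i) = (\<Sum>p\<in>perms A. inner (v (p j)) (\<Sum>i\<in>A. v (p i)))"
    unfolding C_def by (subst sum.swap) (simp add: inner_sum_right)
  also have "\<dots> = 0"
  proof (intro sum.neutral ballI)
    fix p assume "p \<in> perms A"
    then have "(\<Sum>i\<in>A. v (p i)) = 0"
      using sum_permutes_comp[of p A v] sum_v by simp
    then show "inner (v (p j)) (\<Sum>i\<in>A. v (p i)) = 0" by simp
  qed
  finally have "C j + (\<Sum>i\<in>A - {j}. C i) = 0"
    using assms by (simp add: sum.remove)
  also have "(\<Sum>i\<in>A - {j}. C i) = (\<Sum>i\<in>A - {j}. C k)"
    by (rule sum.cong) (auto intro: C_eq)
  finally have "real (card (A - {j})) * C k = - C j"
    by simp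
  moreover have "C j \<ge> 0"
    unfolding C_def by (intro sum_nonneg) simp
  moreover have "card (A - {j}) > 0"
  proof -
    have "k \<in> A - {j}" using assms by simp
    then show ?thesis using assms(1) by (auto simp: card_gt_0_iff)
  qed
  ultimately have "C k \<le> 0"
    by (metis neg_le_0_iff_le of_nat_0_less_iff zero_less_mult_iff linorder_not_le)
  then show ?thesis
    unfolding C_def .
qed

lemma sum_perms_norm_sum_power2_le:
  fixes v :: "'a \<Rightarrow> 'b::real_inner"
  assumes "finite A" "J \<subseteq> A" and sum_v: "(\<Sum>a\<in>A. v a) = 0"
  shows "(\<Sum>p\<in>perms A. (norm (\<Sum>j\<in>J. v (p j)))\<^sup>2)
     \<le> real (card (perms A)) * real (card J) * (\<Sum>a\<in>A. (norm (v a))\<^sup>2) / real (card A)"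
proof -
  have fin_J: "finite J" using assms finite_subset by blast
  have "(\<Sum>p\<in>perms A. (norm (\<Sum>j\<in>J. v (p j)))\<^sup>2)
      = (\<Sum>j\<in>J. \<Sum>k\<in>J. \<Sum>p\<in>perms A. inner (v (p j)) (v (p k)))"
    by (simp add: power2_norm_eq_inner inner_sum_left inner_sum_right sum.swap[of _ "perms A"])
       (subst sum.swap, simp add: inner_commute)
  also have "\<dots> \<le> (\<Sum>j\<in>J. \<Sum>p\<in>perms A. (norm (v (p j)))\<^sup>2)"
  proof (rule sum_mono)
    fix j assume j: "j \<in> J"
    have "(\<Sum>k\<in>J - {j}. \<Sum>p\<in>perms A. inner (v (p j)) (v (p k))) \<le> 0"
      using j assms by (intro sum_nonpos sum_perms_inner_nonpos) auto
    then show "(\<Sum>k\<in>J. \<Sum>p\<in>perms A. inner (v (p j)) (v (p k))) \<le> (\<Sum>p\<in>perms A. (norm (v (p j)))\<^sup>2)"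
      using j fin_J by (simp add: sum.remove power2_norm_eq_inner)
  qed
  also have "\<dots> = (\<Sum>j\<in>J. real (card (perms A)) * (\<Sum>a\<in>A. (norm (v a))\<^sup>2) / real (card A))"
    using assms by (intro sum.cong refl sum_perms_apply) auto
  finally show ?thesis by (simp add: ac_simps)
qed

section \<open>One epoch of SEG-RR\<close>

lemma norm_diff_scaleR_power2:
  fixes d v :: "'a::real_inner"
  shows "(norm (d - t *\<^sub>R v))\<^sup>2 = (norm d)\<^sup>2 - 2 * t * inner v d + t\<^sup>2 * (norm v)\<^sup>2"
proof -
  have "(norm (d - t *\<^sub>R v))\<^sup>2 = inner (d - t *\<^sub>R v) (d - t *\<^sub>R v)"
    by (rule power2_norm_eq_inner)
  also have "\<dots> = inner d d - 2 * t * inner v d + t\<^sup>2 * inner v v"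
    by (simp add: inner_diff_left inner_diff_right inner_commute power2_eq_square algebra_simps)
  finally show ?thesis
    by (simp add: power2_norm_eq_inner)
qed

lemma norm_diff_scaleR_le_contraction:
  fixes d g :: "'a::real_inner"
  assumes mono: "\<mu> * (norm d)\<^sup>2 \<le> inner g d" and lip: "norm g \<le> L * norm d"
    and "0 \<le> t" "t * \<mu> \<le> 1"
  shows "norm (d - t *\<^sub>R g) \<le> (1 - t * \<mu> + (t * L)\<^sup>2 / 2) * norm d"
proof -
  define x y where "x = t * \<mu>" and "y = (t * L)\<^sup>2"
  have "(norm (d - t *\<^sub>R g))\<^sup>2 = (norm d)\<^sup>2 - 2 * t * inner g d + t\<^sup>2 * (norm g)\<^sup>2"
    by (rule norm_diff_scaleR_power2)
  also have "\<dots> \<le> (norm d)\<^sup>2 - 2 * t * (\<mu> * (norm d)\<^sup>2) + t\<^sup>2 * (L * norm d)\<^sup>2"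
    using assms by (intro add_mono diff_mono mult_left_mono power_mono order_refl) auto
  also have "\<dots> = (1 - 2 * x + y) * (norm d)\<^sup>2"
    by (simp add: x_def y_def algebra_simps power2_eq_square)
  also have "\<dots> \<le> ((1 - x + y / 2) * norm d)\<^sup>2"
  proof -
    have "1 - 2 * x + y \<le> (1 - x + y / 2)\<^sup>2"
      using zero_le_power2[of "x - y / 2"] by (simp add: power2_eq_square algebra_simps)
    then show ?thesis
      by (simp add: power_mult_distrib mult_right_mono)
  qed
  finally have "(norm (d - t *\<^sub>R g))\<^sup>2 \<le> ((1 - x + y / 2) * norm d)\<^sup>2" .
  moreover have "0 \<le> (1 - x + y / 2) * norm d"
    using assms by (simp add: x_def y_def)
  ultimately show ?thesis
    unfolding x_def y_def by (rule power2_le_imp_le)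
qed

lemma power2_add_le_weighted:
  fixes a b x :: real
  assumes "0 < x"
  shows "(a + b)\<^sup>2 \<le> (1 + x / 2) * a\<^sup>2 + (1 + 2 / x) * b\<^sup>2"
proof -
  have "0 \<le> x / 2 * (a - 2 * b / x)\<^sup>2"
    using assms by simp
  also have "\<dots> = x / 2 * a\<^sup>2 - 2 * a * b + 2 / x * b\<^sup>2"
    using assms by (simp add: power2_eq_square field_simps)
  finally show ?thesis
    by (simp add: power2_eq_square algebra_simps)
qed

lemma one_plus_half_mult_power2_le:
  fixes x :: real
  assumes "0 \<le> x" "x \<le> 1"
  shows "(1 + x / 2) * (1 - x / 2)\<^sup>2 \<le> 1 - x / 4"
proof -
  have "(1 + x / 2) * (1 - x / 2)\<^sup>2 = 1 - x / 4 - x / 4 * (1 + x - x\<^sup>2 / 2)"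
    by (simp add: power2_eq_square field_simps)
  moreover have "x\<^sup>2 \<le> 1"
    using assms by (simp add: power_le_one)
  ultimately show ?thesis
    using assms by simp
qed

lemma seg_inner_eq_sum:
  "seg_inner Fs g1 g2 p w i = w - g1 *\<^sub>R (\<Sum>j<i. Fs (p j)
     (seg_inner Fs g1 g2 p w j - g2 *\<^sub>R Fs (p j) (seg_inner Fs g1 g2 p w j)))"
  by (induction i) (simp_all add: Let_def algebra_simps)

locale seg_rr_problem =
  fixes n :: nat and Fs :: "nat \<Rightarrow> 'a::euclidean_space \<Rightarrow> 'a" and F :: "'a \<Rightarrow> 'a"
    and L \<mu> :: real and zs :: 'a
  assumes n_pos: "n \<ge> 1"
    and F_eq: "\<And>z. F z = (1 / real n) *\<^sub>R (\<Sum>i<n. Fs i z)"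
    and Fs_lipschitz: "\<And>i x y. i < n \<Longrightarrow> norm (Fs i x - Fs i y) \<le> L * norm (x - y)"
    and F_strongly_monotone: "\<And>x y. \<mu> * (norm (x - y))\<^sup>2 \<le> inner (F x - F y) (x - y)"
    and F_zs: "F zs = 0"
    and mu_pos: "0 < \<mu>"
begin

abbreviation shuffled_prefix :: "(nat \<Rightarrow> nat) \<Rightarrow> nat \<Rightarrow> 'a" where
  "shuffled_prefix p i \<equiv> \<Sum>j<i. Fs (p j) zs"

lemma F_lipschitz: "norm (F x - F y) \<le> L * norm (x - y)"
proof -
  have "norm (F x - F y) = (1 / real n) * norm (\<Sum>i<n. Fs i x - Fs i y)"
    by (simp add: F_eq sum_subtractf flip: scaleR_diff_right)
  also have "\<dots> \<le> (1 / real n) * (\<Sum>i<n. L * norm (x - y))"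
    by (intro mult_left_mono order_trans[OF norm_sum sum_mono] Fs_lipschitz) auto
  also have "\<dots> = L * norm (x - y)"
    using n_pos by simp
  finally show ?thesis .
qed

lemma mu_le_L: "\<mu> \<le> L"
proof -
  obtain b :: 'a where "b \<in> Basis"
    using nonempty_Basis by blast
  then have b: "0 < norm b"
    by (auto simp: nonzero_Basis)
  have "\<mu> * (norm b)\<^sup>2 \<le> inner (F (zs + b) - F zs) b"
    using F_strongly_monotone[of "zs + b" zs] by simp
  also have "\<dots> \<le> norm (F (zs + b) - F zs) * norm b"
    by (rule Cauchy_Schwarz_ineq2[THEN abs_le_D1])
  also have "\<dots> \<le> L * (norm b)\<^sup>2"
    using F_lipschitz[of "zs + b" zs] b by (simp add: power2_eq_square mult_right_mono)
  finally show ?thesis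
    using b by simp
qed

lemma L_pos: "0 < L"
  using mu_pos mu_le_L by simp

lemma sum_Fs_zs: "(\<Sum>i<n. Fs i zs) = 0"
  using F_eq[of zs] F_zs n_pos by simp

lemma norm_Fs_le: "i < n \<Longrightarrow> norm (Fs i x) \<le> norm (Fs i zs) + L * norm (x - zs)"
  using Fs_lipschitz[of i x zs] norm_triangle_ineq[of "Fs i x - Fs i zs" "Fs i zs"] by simp


lemma sum_perms_sum_power2_shuffled_prefix_le:
  "(\<Sum>p\<in>perms {..<n}. \<Sum>i<n. (norm (shuffled_prefix p i))\<^sup>2)
    \<le> real n * real (card (perms {..<n})) * (\<Sum>a<n. (norm (Fs a zs))\<^sup>2)"
proof -
  define C where "C = real (card (perms {..<n}))"
  define S2 where "S2 = (\<Sum>a<n. (norm (Fs a zs))\<^sup>2)"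
  have "(\<Sum>p\<in>perms {..<n}. (norm (shuffled_prefix p i))\<^sup>2) \<le> C * S2" if "i < n" for i
  proof -
    have "(\<Sum>p\<in>perms {..<n}. (norm (shuffled_prefix p i))\<^sup>2) \<le> C * real i * S2 / real n"
      using sum_perms_norm_sum_power2_le[of "{..<n}" "{..<i}" "\<lambda>a. Fs a zs"] that sum_Fs_zs
      by (simp add: C_def S2_def)
    also have "\<dots> \<le> C * real n * S2 / real n"
      using that by (intro divide_right_mono mult_right_mono mult_left_mono) (auto simp: C_def S2_def sum_nonneg)
    finally show ?thesis
      using n_pos by simp
  qed
  then have "(\<Sum>i<n. \<Sum>p\<in>perms {..<n}. (norm (shuffled_prefix p i))\<^sup>2) \<le> (\<Sum>i<n. C * S2)"
    by (intro sum_mono) simp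
  then show ?thesis
    by (subst sum.swap) (simp add: C_def S2_def)
qed

end

locale seg_rr_epoch = seg_rr_problem +
  fixes \<gamma> :: real
  assumes gamma_pos: "0 < \<gamma>"
    and step_L: "real n * \<gamma> * L \<le> 1 / 20"
    and step_L_sq: "real n * \<gamma> * L\<^sup>2 \<le> \<mu> / 10"
begin

abbreviation iterate :: "(nat \<Rightarrow> nat) \<Rightarrow> 'a \<Rightarrow> nat \<Rightarrow> 'a" where
  "iterate p w i \<equiv> seg_inner Fs \<gamma> (2 * \<gamma>) p w i"

abbreviation extrapolate :: "(nat \<Rightarrow> nat) \<Rightarrow> 'a \<Rightarrow> nat \<Rightarrow> 'a" where
  "extrapolate p w i \<equiv> iterate p w i - (2 * \<gamma>) *\<^sub>R Fs (p i) (iterate p w i)"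

lemma mu_step_pos: "0 < \<mu> * real n * \<gamma>"
  using mu_pos n_pos gamma_pos by simp

lemma mu_step_le: "\<mu> * real n * \<gamma> \<le> 1 / 20"
proof -
  have "\<mu> * (real n * \<gamma>) \<le> L * (real n * \<gamma>)"
    using mu_le_L gamma_pos by (intro mult_right_mono) auto
  then show ?thesis
    using step_L by (simp add: ac_simps)
qed

lemma mu_gamma_le: "\<mu> * \<gamma> \<le> 1 / 20"
proof -
  have "\<mu> * \<gamma> * 1 \<le> \<mu> * \<gamma> * real n"
    using mu_pos gamma_pos n_pos by (intro mult_left_mono) auto
  then show ?thesis
    using mu_step_le by (simp add: ac_simps)
qed

lemma step_L_power2_le: "(real n * \<gamma> * L)\<^sup>2 \<le> \<mu> * real n * \<gamma> / 10"
proof -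
  have "(real n * \<gamma> * L)\<^sup>2 = (real n * \<gamma>) * (real n * \<gamma> * L\<^sup>2)"
    by (simp add: power2_eq_square algebra_simps)
  also have "\<dots> \<le> (real n * \<gamma>) * (\<mu> / 10)"
    using step_L_sq gamma_pos by (intro mult_left_mono) auto
  finally show ?thesis
    by (simp add: algebra_simps)
qed

lemma norm_extrapolate_diff_le:
  assumes "p permutes {..<n}" "i < n"
  shows "norm (extrapolate p w i - w) \<le> (1 + 2 * \<gamma> * L) * norm (iterate p w i - w)
    + 2 * \<gamma> * norm (Fs (p i) zs) + 2 * \<gamma> * L * norm (w - zs)"
proof -
  have p_i: "p i < n"
    using assms permutes_in_image by fastforce
  have "norm (extrapolate p w i - w)
      \<le> norm (iterate p w i - w) + 2 * \<gamma> * norm (Fs (p i) (iterate p w i))"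
    using norm_triangle_ineq4[of "iterate p w i - w" "(2 * \<gamma>) *\<^sub>R Fs (p i) (iterate p w i)"]
      gamma_pos by (simp add: algebra_simps)
  also have "norm (Fs (p i) (iterate p w i))
      \<le> norm (Fs (p i) zs) + L * (norm (iterate p w i - w) + norm (w - zs))"
  proof -
    have "norm (iterate p w i - zs) \<le> norm (iterate p w i - w) + norm (w - zs)"
      using norm_triangle_ineq[of "iterate p w i - w" "w - zs"] by simp
    then show ?thesis
      using norm_Fs_le[OF p_i, of "iterate p w i"] L_pos
      by (smt (verit) mult_left_mono)
  qed
  finally show ?thesis
    using gamma_pos by (simp add: algebra_simps mult_left_mono)
qed

lemma norm_iterate_diff_le:
  assumes p: "p permutes {..<n}" and "i \<le> n"
  shows "norm (iterate p w i - w) \<le> \<gamma> * norm (shuffled_prefix p i)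
    + \<gamma> * L * ((\<Sum>j<n. norm (extrapolate p w j - w)) + real n * norm (w - zs))"
proof -
  have "iterate p w i - w
      = - \<gamma> *\<^sub>R (shuffled_prefix p i + (\<Sum>j<i. Fs (p j) (extrapolate p w j) - Fs (p j) zs))"
    by (subst seg_inner_eq_sum) (simp add: sum_subtractf)
  then have "norm (iterate p w i - w)
      = \<gamma> * norm (shuffled_prefix p i + (\<Sum>j<i. Fs (p j) (extrapolate p w j) - Fs (p j) zs))"
    using gamma_pos by simp
  also have "\<dots> \<le> \<gamma> * (norm (shuffled_prefix p i)
      + (\<Sum>j<i. norm (Fs (p j) (extrapolate p w j) - Fs (p j) zs)))"
    using gamma_pos norm_sum[of "\<lambda>j. Fs (p j) (extrapolate p w j) - Fs (p j) zs" "{..<i}"]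
    by (intro mult_left_mono order_trans[OF norm_triangle_ineq]) auto
  also have "(\<Sum>j<i. norm (Fs (p j) (extrapolate p w j) - Fs (p j) zs))
      \<le> (\<Sum>j<n. L * (norm (extrapolate p w j - w) + norm (w - zs)))"
  proof (rule order_trans[OF sum_mono sum_mono2])
    fix j assume "j \<in> {..<i}"
    then have "p j < n"
      using assms permutes_in_image by fastforce
    then have "norm (Fs (p j) (extrapolate p w j) - Fs (p j) zs) \<le> L * norm (extrapolate p w j - zs)"
      by (rule Fs_lipschitz)
    also have "\<dots> \<le> L * (norm (extrapolate p w j - w) + norm (w - zs))"
      using L_pos norm_triangle_ineq[of "extrapolate p w j - w" "w - zs"]
      by (intro mult_left_mono) auto
    finally show "norm (Fs (p j) (extrapolate p w j) - Fs (p j) zs)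
        \<le> L * (norm (extrapolate p w j - w) + norm (w - zs))" .
  qed (use assms L_pos in auto)
  finally show ?thesis
    using gamma_pos by (simp add: sum.distrib sum_distrib_left algebra_simps mult_left_mono)
qed

lemma sum_norm_extrapolate_diff_le_iterate:
  assumes p: "p permutes {..<n}"
  shows "(\<Sum>i<n. norm (extrapolate p w i - w))
    \<le> (1 + 2 * \<gamma> * L) * (\<Sum>i<n. norm (iterate p w i - w)) + 2 * \<gamma> * (\<Sum>a<n. norm (Fs a zs))
      + 2 * (real n * \<gamma> * L) * norm (w - zs)"
proof -
  have "(\<Sum>i<n. norm (extrapolate p w i - w)) \<le> (\<Sum>i<n. (1 + 2 * \<gamma> * L) * norm (iterate p w i - w)
      + 2 * \<gamma> * norm (Fs (p i) zs) + 2 * \<gamma> * L * norm (w - zs))"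
    by (intro sum_mono norm_extrapolate_diff_le[OF p]) simp
  also have "\<dots> = (1 + 2 * \<gamma> * L) * (\<Sum>i<n. norm (iterate p w i - w))
      + 2 * \<gamma> * (\<Sum>a<n. norm (Fs a zs)) + 2 * (real n * \<gamma> * L) * norm (w - zs)"
    using sum_permutes_comp[OF p, of "\<lambda>a. norm (Fs a zs)"]
    by (simp add: sum.distrib flip: sum_distrib_left)
  finally show ?thesis .
qed

lemma sum_norm_iterate_diff_le:
  assumes p: "p permutes {..<n}"
  shows "(\<Sum>i<n. norm (iterate p w i - w))
    \<le> \<gamma> * (\<Sum>i<n. norm (shuffled_prefix p i)) + (real n * \<gamma> * L) * (\<Sum>i<n. norm (extrapolate p w i - w))
      + real n ^ 2 * \<gamma> * L * norm (w - zs)"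
proof -
  have "(\<Sum>i<n. norm (iterate p w i - w)) \<le> (\<Sum>i<n. \<gamma> * norm (shuffled_prefix p i)
      + \<gamma> * L * ((\<Sum>j<n. norm (extrapolate p w j - w)) + real n * norm (w - zs)))"
    by (intro sum_mono norm_iterate_diff_le[OF p]) simp
  also have "\<dots> = \<gamma> * (\<Sum>i<n. norm (shuffled_prefix p i))
      + (real n * \<gamma> * L) * (\<Sum>i<n. norm (extrapolate p w i - w)) + real n ^ 2 * \<gamma> * L * norm (w - zs)"
    by (simp add: sum.distrib algebra_simps power2_eq_square flip: sum_distrib_left)
  finally show ?thesis .
qed

text \<open>The two previous bounds are mutually recursive; since \<open>(1 + 2\<gamma>L) n\<gamma>L \<le> 11/200\<close>,
  substituting one into the other solves the recursion.\<close>
lemma sum_norm_extrapolate_diff_le: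
  assumes p: "p permutes {..<n}"
  shows "(\<Sum>i<n. norm (extrapolate p w i - w))
    \<le> \<gamma> * (2 * (\<Sum>i<n. norm (shuffled_prefix p i)) + 3 * (\<Sum>a<n. norm (Fs a zs)))
      + 7 / 2 * real n ^ 2 * \<gamma> * L * norm (w - zs)"
proof -
  define Z where "Z = (\<Sum>i<n. norm (extrapolate p w i - w))"
  define D where "D = (\<Sum>i<n. norm (iterate p w i - w))"
  define c where "c = 1 + 2 * \<gamma> * L"
  define a where "a = real n * \<gamma> * L"
  define T where "T = real n ^ 2 * \<gamma> * L * norm (w - zs)"
  have "\<gamma> * L \<le> a"
    unfolding a_def using n_pos gamma_pos L_pos by (simp add: mult_right_mono)
  then have c: "1 \<le> c" "c \<le> 11 / 10"
    unfolding c_def using gamma_pos L_pos step_L[folded a_def] by auto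
  have "0 \<le> a" "0 \<le> Z"
    unfolding a_def Z_def using gamma_pos L_pos by (auto intro: sum_nonneg)
  then have "c * a * Z \<le> 11 / 10 * (1 / 20) * Z"
    using c step_L by (intro mult_right_mono mult_mono) (auto simp: a_def)
  moreover have "a * norm (w - zs) \<le> T"
    unfolding a_def T_def using n_pos gamma_pos L_pos
    by (intro mult_right_mono) (auto simp: power2_eq_square)
  moreover have nonneg: "0 \<le> \<gamma> * (\<Sum>i<n. norm (shuffled_prefix p i))"
    "0 \<le> \<gamma> * (\<Sum>a<n. norm (Fs a zs))" "0 \<le> T"
    unfolding T_def using gamma_pos L_pos by (auto intro!: mult_nonneg_nonneg sum_nonneg)
  moreover have "c * D \<le> c * \<gamma> * (\<Sum>i<n. norm (shuffled_prefix p i)) + c * a * Z + c * T"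
    using mult_left_mono[OF sum_norm_iterate_diff_le[OF p, of w], of c] c
    by (simp add: D_def Z_def T_def a_def algebra_simps)
  moreover have "c * \<gamma> * (\<Sum>i<n. norm (shuffled_prefix p i)) \<le> 11 / 10 * (\<gamma> * (\<Sum>i<n. norm (shuffled_prefix p i)))"
    "c * T \<le> 11 / 10 * T"
    using mult_right_mono[OF c(2) nonneg(1)] mult_right_mono[OF c(2) nonneg(3)] by (simp_all add: mult.assoc)
  ultimately show ?thesis
    using sum_norm_extrapolate_diff_le_iterate[OF p, of w]
    by (simp add: Z_def D_def c_def a_def T_def algebra_simps)
qed

lemma iterate_epoch_diff_eq:
  assumes p: "p permutes {..<n}"
  shows "iterate p w n - zs = ((w - zs) - (real n * \<gamma>) *\<^sub>R F w)
    - \<gamma> *\<^sub>R (\<Sum>i<n. Fs (p i) (extrapolate p w i) - Fs (p i) w)"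
proof -
  have "(\<Sum>i<n. Fs (p i) w) = real n *\<^sub>R F w"
    using sum_permutes_comp[OF p, of "\<lambda>a. Fs a w"] F_eq[of w] n_pos by simp
  then show ?thesis
    by (subst seg_inner_eq_sum) (simp add: sum_subtractf algebra_simps)
qed

lemma norm_mean_step_le:
  "norm ((w - zs) - (real n * \<gamma>) *\<^sub>R F w)
    \<le> (1 - \<mu> * real n * \<gamma> + (real n * \<gamma> * L)\<^sup>2 / 2) * norm (w - zs)"
proof -
  have "norm ((w - zs) - (real n * \<gamma>) *\<^sub>R F w)
      \<le> (1 - real n * \<gamma> * \<mu> + (real n * \<gamma> * L)\<^sup>2 / 2) * norm (w - zs)"
  proof (rule norm_diff_scaleR_le_contraction)
    show "\<mu> * (norm (w - zs))\<^sup>2 \<le> inner (F w) (w - zs)"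
      using F_strongly_monotone[of w zs] F_zs by simp
    show "norm (F w) \<le> L * norm (w - zs)"
      using F_lipschitz[of w zs] F_zs by simp
    show "real n * \<gamma> * \<mu> \<le> 1"
      using mu_step_le by (simp add: algebra_simps)
  qed (use gamma_pos in simp)
  then show ?thesis
    by (simp add: algebra_simps)
qed

lemma norm_iterate_epoch_le:
  assumes p: "p permutes {..<n}"
  shows "norm (iterate p w n - zs) \<le> (1 - \<mu> * real n * \<gamma> / 2) * norm (w - zs)
    + \<gamma>\<^sup>2 * L * (2 * (\<Sum>i<n. norm (shuffled_prefix p i)) + 3 * (\<Sum>a<n. norm (Fs a zs)))"
proof -
  define e where "e = (\<Sum>i<n. Fs (p i) (extrapolate p w i) - Fs (p i) w)"
  have "norm e \<le> (\<Sum>i<n. L * norm (extrapolate p w i - w))"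
    unfolding e_def using p permutes_in_image
    by (intro order_trans[OF norm_sum] sum_mono Fs_lipschitz) fastforce
  then have "\<gamma> * norm e \<le> \<gamma> * L * (\<Sum>i<n. norm (extrapolate p w i - w))"
    using gamma_pos by (simp add: mult.assoc mult_left_mono flip: sum_distrib_left)
  also have "\<dots> \<le> \<gamma>\<^sup>2 * L * (2 * (\<Sum>i<n. norm (shuffled_prefix p i)) + 3 * (\<Sum>a<n. norm (Fs a zs)))
      + 7 / 2 * (real n * \<gamma> * L)\<^sup>2 * norm (w - zs)"
    using mult_left_mono[OF sum_norm_extrapolate_diff_le[OF p, of w], of "\<gamma> * L"] gamma_pos L_pos
    by (simp add: power2_eq_square algebra_simps)
  moreover have "norm (iterate p w n - zs) \<le> norm ((w - zs) - (real n * \<gamma>) *\<^sub>R F w) + \<gamma> * norm e"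
    unfolding iterate_epoch_diff_eq[OF p] e_def[symmetric]
    using norm_triangle_ineq4[of "(w - zs) - (real n * \<gamma>) *\<^sub>R F w" "\<gamma> *\<^sub>R e"] gamma_pos by simp
  moreover have "4 * (real n * \<gamma> * L)\<^sup>2 * norm (w - zs) \<le> \<mu> * real n * \<gamma> / 2 * norm (w - zs)"
    using step_L_power2_le mu_step_pos by (intro mult_right_mono) auto
  ultimately show ?thesis
    using norm_mean_step_le[of w] by (simp add: algebra_simps)
qed

lemma power2_norm_iterate_epoch_le:
  assumes p: "p permutes {..<n}"
  shows "(norm (iterate p w n - zs))\<^sup>2 \<le> (1 - \<mu> * real n * \<gamma> / 4) * (norm (w - zs))\<^sup>2
    + \<gamma> ^ 3 * L\<^sup>2 / \<mu> * (24 * (\<Sum>i<n. (norm (shuffled_prefix p i))\<^sup>2)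
      + 54 * (\<Sum>a<n. (norm (Fs a zs))\<^sup>2))"
proof -
  define x where "x = \<mu> * real n * \<gamma>"
  define SP where "SP = (\<Sum>i<n. norm (shuffled_prefix p i))"
  define S where "S = (\<Sum>a<n. norm (Fs a zs))"
  define A where "A = (1 - x / 2) * norm (w - zs)"
  define B where "B = \<gamma>\<^sup>2 * L * (2 * SP + 3 * S)"
  have x: "0 < x" "x \<le> 1 / 20"
    unfolding x_def using mu_step_pos mu_step_le by auto
  have "0 \<le> B"
    unfolding B_def SP_def S_def using L_pos
    by (intro mult_nonneg_nonneg add_nonneg_nonneg sum_nonneg) auto
  with x have "(norm (iterate p w n - zs))\<^sup>2 \<le> (A + B)\<^sup>2"
    using norm_iterate_epoch_le[OF p, of w]
    by (intro power_mono) (auto simp: A_def B_def x_def SP_def S_def)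
  also have "\<dots> \<le> (1 + x / 2) * A\<^sup>2 + (1 + 2 / x) * B\<^sup>2"
    by (rule power2_add_le_weighted[OF x(1)])
  also have "(1 + x / 2) * A\<^sup>2 \<le> (1 - x / 4) * (norm (w - zs))\<^sup>2"
    unfolding A_def power_mult_distrib mult.assoc[symmetric]
    using x by (intro mult_right_mono one_plus_half_mult_power2_le) auto
  also have "(1 + 2 / x) * B\<^sup>2 \<le> 3 / x * (\<gamma> ^ 4 * L\<^sup>2 * (real n * (8 * (\<Sum>i<n. (norm (shuffled_prefix p i))\<^sup>2)
      + 18 * (\<Sum>a<n. (norm (Fs a zs))\<^sup>2))))"
  proof (rule mult_mono)
    show "1 + 2 / x \<le> 3 / x"
      using x by (simp add: field_simps)
    have "(2 * SP + 3 * S)\<^sup>2 \<le> 2 * (2 * SP)\<^sup>2 + 2 * (3 * S)\<^sup>2"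
      using power2_add_le_weighted[of 2 "2 * SP" "3 * S"] by simp
    also have "\<dots> \<le> real n * (8 * (\<Sum>i<n. (norm (shuffled_prefix p i))\<^sup>2) + 18 * (\<Sum>a<n. (norm (Fs a zs))\<^sup>2))"
      using sum_squared_le_sum_of_squares[of _ "{..<n}"]
      by (simp add: SP_def S_def power_mult_distrib algebra_simps add_mono)
    finally show "B\<^sup>2 \<le> \<gamma> ^ 4 * L\<^sup>2 * (real n * (8 * (\<Sum>i<n. (norm (shuffled_prefix p i))\<^sup>2)
        + 18 * (\<Sum>a<n. (norm (Fs a zs))\<^sup>2)))"
      unfolding B_def by (simp add: power_mult_distrib mult_left_mono flip: power_mult)
  qed (use x in auto)
  also have "3 / x * (\<gamma> ^ 4 * L\<^sup>2 * (real n * (8 * (\<Sum>i<n. (norm (shuffled_prefix p i))\<^sup>2)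
      + 18 * (\<Sum>a<n. (norm (Fs a zs))\<^sup>2))))
    = \<gamma> ^ 3 * L\<^sup>2 / \<mu> * (24 * (\<Sum>i<n. (norm (shuffled_prefix p i))\<^sup>2)
      + 54 * (\<Sum>a<n. (norm (Fs a zs))\<^sup>2))"
    using mu_pos gamma_pos n_pos by (simp add: x_def field_simps power3_eq_cube power4_eq_xxxx)
  finally show ?thesis
    by (simp add: x_def)
qed

lemma sum_perms_power2_norm_iterate_epoch_le:
  "(\<Sum>p\<in>perms {..<n}. (norm (iterate p w n - zs))\<^sup>2)
    \<le> real (card (perms {..<n})) * ((1 - \<mu> * real n * \<gamma> / 4) * (norm (w - zs))\<^sup>2
      + 24 * real n * (29 + real n) * \<gamma> ^ 3 * L\<^sup>2
        * ((1 / real n) * (\<Sum>a<n. (norm (Fs a zs))\<^sup>2)) / \<mu>)"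
proof -
  define C where "C = real (card (perms {..<n}))"
  define K where "K = \<gamma> ^ 3 * L\<^sup>2 / \<mu>"
  define S2 where "S2 = (\<Sum>a<n. (norm (Fs a zs))\<^sup>2)"
  define q where "q = (1 - \<mu> * real n * \<gamma> / 4) * (norm (w - zs))\<^sup>2"
  have "0 \<le> K" "0 \<le> S2" "0 \<le> C"
    unfolding K_def S2_def C_def using gamma_pos mu_pos by (auto intro: sum_nonneg)
  have "(\<Sum>p\<in>perms {..<n}. (norm (iterate p w n - zs))\<^sup>2)
      \<le> (\<Sum>p\<in>perms {..<n}. q + K * (24 * (\<Sum>i<n. (norm (shuffled_prefix p i))\<^sup>2) + 54 * S2))"
    unfolding q_def K_def S2_def using power2_norm_iterate_epoch_le by (intro sum_mono) simp
  also have "\<dots> = C * (q + 54 * K * S2)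
      + 24 * K * (\<Sum>p\<in>perms {..<n}. \<Sum>i<n. (norm (shuffled_prefix p i))\<^sup>2)"
    by (simp add: C_def sum.distrib algebra_simps flip: sum_distrib_left)
  also have "\<dots> \<le> C * (q + 54 * K * S2) + 24 * K * (real n * C * S2)"
    using sum_perms_sum_power2_shuffled_prefix_le \<open>0 \<le> K\<close>
    by (intro add_left_mono mult_left_mono) (simp_all add: C_def S2_def)
  also have "\<dots> \<le> C * (q + 24 * real n * (29 + real n) * K * (S2 / real n))"
  proof -
    have "54 * K * S2 + 24 * K * (real n * S2) \<le> 24 * real n * (29 + real n) * K * (S2 / real n)"
      using n_pos \<open>0 \<le> K\<close> \<open>0 \<le> S2\<close> by (simp add: field_simps mult_right_mono)
    then have "C * (54 * K * S2 + 24 * K * (real n * S2))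
        \<le> C * (24 * real n * (29 + real n) * K * (S2 / real n))"
      using \<open>0 \<le> C\<close> by (rule mult_left_mono)
    then show ?thesis
      by (simp add: algebra_simps)
  qed
  finally show ?thesis
    using n_pos by (simp add: C_def K_def S2_def q_def)
qed

end

section \<open>Expectation over the epochs\<close>

lemma seg_rr_cong:
  "(\<And>j. j < k \<Longrightarrow> ps j = ps' j) \<Longrightarrow> seg_rr n Fs g1 g2 ps z0 k = seg_rr n Fs g1 g2 ps' z0 k"
  by (induction k) auto

lemma finite_perm_seqs: "finite (perm_seqs n K)"
  unfolding perm_seqs_def by (intro finite_PiE) (auto intro: finite_permutations)

lemma card_perm_seqs_pos: "0 < card (perm_seqs n K)"
proof -
  have "(\<lambda>k\<in>{..K}. id) \<in> perm_seqs n K"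
    unfolding perm_seqs_def by (auto simp: permutes_id)
  then show ?thesis
    using finite_perm_seqs card_gt_0_iff by blast
qed

lemma expect_perms_const: "expect_perms n K (\<lambda>_. c) = c"
  using card_perm_seqs_pos by (simp add: expect_perms_def)

lemma expect_perms_nonneg: "(\<And>ps. 0 \<le> X ps) \<Longrightarrow> 0 \<le> expect_perms n K X"
  unfolding expect_perms_def by (simp add: sum_nonneg)

lemma sum_perm_seqs_split:
  assumes "k \<le> K"
  shows "(\<Sum>ps\<in>perm_seqs n K. f ps)
    = (\<Sum>g\<in>({..K} - {k}) \<rightarrow>\<^sub>E perms {..<n}. \<Sum>p\<in>perms {..<n}. f (g(k := p)))"
proof -
  define G where "G = ({..K} - {k}) \<rightarrow>\<^sub>E perms {..<n}"
  have "{..K} = insert k ({..K} - {k})"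
    using assms by auto
  then have split: "perm_seqs n K = (\<lambda>(p, g). g(k := p)) ` (perms {..<n} \<times> G)"
    unfolding perm_seqs_def G_def by (metis PiE_insert_eq)
  have inj: "inj_on (\<lambda>(p, g). g(k := p)) (perms {..<n} \<times> G)"
    unfolding G_def using inj_combinator[of k "{..K} - {k}" "\<lambda>_. perms {..<n}"] by simp
  have "(\<Sum>ps\<in>perm_seqs n K. f ps) = (\<Sum>(p, g)\<in>perms {..<n} \<times> G. f (g(k := p)))"
    unfolding split by (subst sum.reindex[OF inj]) (simp add: case_prod_unfold)
  also have "\<dots> = (\<Sum>g\<in>G. \<Sum>p\<in>perms {..<n}. f (g(k := p)))"
    by (simp add: sum.cartesian_product[symmetric] sum.swap[of _ "perms {..<n}"])
  finally show ?thesis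
    unfolding G_def .
qed

text \<open>Conditioning on all epochs but the \<open>k\<close>-th.\<close>
lemma expect_perms_step_le:
  assumes "k \<le> K"
    and st: "\<And>ps p. st (ps(k := p)) = st ps"
    and bound: "\<And>w. (\<Sum>p\<in>perms {..<n}. h w p) \<le> real (card (perms {..<n})) * (q * \<phi> w + b)"
  shows "expect_perms n K (\<lambda>ps. h (st ps) (ps k)) \<le> q * expect_perms n K (\<lambda>ps. \<phi> (st ps)) + b"
proof -
  define G where "G = ({..K} - {k}) \<rightarrow>\<^sub>E perms {..<n}"
  define C where "C = real (card (perms {..<n}))"
  have split: "(\<Sum>ps\<in>perm_seqs n K. f ps) = (\<Sum>g\<in>G. \<Sum>p\<in>perms {..<n}. f (g(k := p)))" for f
    unfolding G_def by (rule sum_perm_seqs_split[OF assms(1)])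
  have "(\<Sum>ps\<in>perm_seqs n K. h (st ps) (ps k)) = (\<Sum>g\<in>G. \<Sum>p\<in>perms {..<n}. h (st g) p)"
    by (simp add: split st)
  also have "\<dots> \<le> (\<Sum>g\<in>G. C * (q * \<phi> (st g) + b))"
    unfolding C_def by (intro sum_mono bound)
  also have "\<dots> = q * (\<Sum>g\<in>G. C * \<phi> (st g)) + b * (\<Sum>g\<in>G. C)"
    by (simp add: sum.distrib sum_distrib_left algebra_simps)
  also have "\<dots> = q * (\<Sum>ps\<in>perm_seqs n K. \<phi> (st ps)) + b * real (card (perm_seqs n K))"
    using split[of "\<lambda>ps. \<phi> (st ps)"] split[of "\<lambda>_. 1 :: real"] by (simp add: st C_def)
  finally show ?thesis
    using card_perm_seqs_pos[of n K]
    by (simp add: expect_perms_def pos_divide_le_eq divide_simps algebra_simps)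
qed

context seg_rr_problem
begin

lemma expect_seg_rr_Suc_le:
  assumes "k \<le> K" "g2 k = 2 * g1 k" "0 < g1 k"
    and "real n * g1 k * L \<le> 1 / 20" "real n * g1 k * L\<^sup>2 \<le> \<mu> / 10"
  shows "expect_perms n K (\<lambda>ps. (norm (seg_rr n Fs g1 g2 ps z0 (Suc k) - zs))\<^sup>2)
    \<le> (1 - \<mu> * real n * g1 k / 4) * expect_perms n K (\<lambda>ps. (norm (seg_rr n Fs g1 g2 ps z0 k - zs))\<^sup>2)
      + 24 * real n * (29 + real n) * g1 k ^ 3 * L\<^sup>2
        * ((1 / real n) * (\<Sum>a<n. (norm (Fs a zs))\<^sup>2)) / \<mu>"
proof -
  interpret seg_rr_epoch n Fs F L \<mu> zs "g1 k"
    by unfold_locales (use assms in auto)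
  have "expect_perms n K (\<lambda>ps. (norm (seg_rr n Fs g1 g2 ps z0 (Suc k) - zs))\<^sup>2)
      = expect_perms n K (\<lambda>ps. (norm (iterate (ps k) (seg_rr n Fs g1 g2 ps z0 k) n - zs))\<^sup>2)"
    using assms(2) by simp
  also have "\<dots> \<le> (1 - \<mu> * real n * g1 k / 4) * expect_perms n K (\<lambda>ps. (norm (seg_rr n Fs g1 g2 ps z0 k - zs))\<^sup>2)
      + 24 * real n * (29 + real n) * g1 k ^ 3 * L\<^sup>2
        * ((1 / real n) * (\<Sum>a<n. (norm (Fs a zs))\<^sup>2)) / \<mu>"
  proof (rule expect_perms_step_le[OF assms(1), where \<phi> = "\<lambda>w. (norm (w - zs))\<^sup>2"])
    fix ps :: "nat \<Rightarrow> nat \<Rightarrow> nat" and p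
    show "seg_rr n Fs g1 g2 (ps(k := p)) z0 k = seg_rr n Fs g1 g2 ps z0 k"
      by (rule seg_rr_cong) simp
  qed (rule sum_perms_power2_norm_iterate_epoch_le)
  finally show ?thesis .
qed

end

section \<open>The two-phase step-size schedule\<close>

definition two_phase_step :: "real \<Rightarrow> real \<Rightarrow> nat \<Rightarrow> nat \<Rightarrow> real" where
  "two_phase_step \<mu> \<gamma> k0 k =
     (if k < k0 then \<gamma> else 4 * (2 * real k + 1) / (\<mu> * (real k + 1)\<^sup>2))"

lemma two_phase_step_pos: "0 < \<mu> \<Longrightarrow> 0 < \<gamma> \<Longrightarrow> 0 < two_phase_step \<mu> \<gamma> k0 k"
  by (simp add: two_phase_step_def)

lemma two_phase_step_le:
  assumes "0 < \<mu>" "0 < \<gamma>" "\<mu> * \<gamma> \<le> 8" and k0: "k0 = nat \<lceil>64 / (\<mu>\<^sup>2 * \<gamma>\<^sup>2)\<rceil>"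
  shows "two_phase_step \<mu> \<gamma> k0 k \<le> \<gamma>"
proof (cases "k < k0")
  case False
  define t where "t = \<mu> * \<gamma>"
  have t_pos: "0 < t"
    using assms by (simp add: t_def)
  have k0_ge: "64 / t\<^sup>2 \<le> real k0"
    using real_nat_ceiling_ge k0 by (simp add: t_def power_mult_distrib)
  have "\<mu> * two_phase_step \<mu> \<gamma> k0 k * (real k + 1) = 4 * (2 * real k + 1) / (real k + 1)"
    using False assms by (simp add: two_phase_step_def power2_eq_square)
  also have "\<dots> \<le> 8"
    by (simp add: field_simps)
  also have "8 \<le> t * (64 / t\<^sup>2)"
    using assms(1-3) by (simp add: t_def field_simps power2_eq_square)
  also have "\<dots> \<le> t * (real k + 1)"
    using k0_ge False t_pos by (intro mult_left_mono) auto
  finally have "\<mu> * two_phase_step \<mu> \<gamma> k0 k * (real k + 1) \<le> \<mu> * \<gamma> * (real k + 1)"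
    by (simp add: t_def)
  then show ?thesis
    using assms(1) by (simp add: mult_le_cancel_right mult_le_cancel_left_pos)
qed (simp add: two_phase_step_def)

lemma geometric_recurrence_le:
  fixes a :: "nat \<Rightarrow> real"
  assumes step: "\<And>k. k < m \<Longrightarrow> a (Suc k) \<le> q * a k + b"
    and "0 \<le> q" "q < 1" "0 \<le> b"
  shows "a m \<le> q ^ m * a 0 + b / (1 - q)"
  using step
proof (induction m)
  case 0
  then show ?case
    using assms by simp
next
  case (Suc m)
  then have "a (Suc m) \<le> q * (q ^ m * a 0 + b / (1 - q)) + b"
    using assms(2) by (smt (verit) lessI less_SucI mult_left_mono)
  also have "\<dots> = q ^ Suc m * a 0 + b / (1 - q)"
    using assms(3) by (simp add: field_simps)
  finally show ?case .
qed

lemma weighted_telescoping_le: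
  fixes a :: "nat \<Rightarrow> real"
  assumes step: "\<And>k. m \<le> k \<Longrightarrow> k < M \<Longrightarrow> (real k + 1)\<^sup>2 * a (Suc k) \<le> (real k)\<^sup>2 * a k + b"
    and "m \<le> M"
  shows "(real M)\<^sup>2 * a M \<le> (real m)\<^sup>2 * a m + (real M - real m) * b"
  using assms(2)
proof (induction M rule: dec_induct)
  case (step M)
  then show ?case
    using assms(1)[of M] by (simp add: algebra_simps)
qed simp

lemma decreasing_step_contraction:
  fixes t :: real and n k :: nat
  assumes "1 \<le> n" and t: "t * (real k + 1)\<^sup>2 = 4 * (2 * real k + 1)"
  shows "(real k + 1)\<^sup>2 * (1 - real n * t / 4) \<le> (real k)\<^sup>2"
proof -
  have "(real k + 1)\<^sup>2 * (1 - real n * t / 4) = (real k + 1)\<^sup>2 - real n * (t * (real k + 1)\<^sup>2) / 4"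
    by (simp add: algebra_simps)
  also have "\<dots> = (real k + 1)\<^sup>2 - real n * (2 * real k + 1)"
    unfolding t by simp
  also have "\<dots> \<le> (real k + 1)\<^sup>2 - (2 * real k + 1)"
    using assms(1) by (intro diff_left_mono) (simp add: mult_le_cancel_right1)
  also have "\<dots> = (real k)\<^sup>2"
    by (simp add: power2_eq_square algebra_simps)
  finally show ?thesis .
qed

lemma decreasing_step_noise:
  fixes t :: real and n k :: nat
  assumes "0 \<le> t" "n \<le> k + 1" and t: "t * (real k + 1)\<^sup>2 = 4 * (2 * real k + 1)"
  shows "real n * (t ^ 3 * (real k + 1)\<^sup>2) \<le> 512"
proof -
  have "t * (real k + 1) * (real k + 1) \<le> 8 * (real k + 1)"
    using t by (simp add: power2_eq_square algebra_simps)
  then have tk: "t * (real k + 1) \<le> 8"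
    by (rule mult_right_le_imp_le) simp
  have "real n * (t ^ 3 * (real k + 1)\<^sup>2) \<le> (real k + 1) * (t ^ 3 * (real k + 1)\<^sup>2)"
    using assms(1,2) by (intro mult_right_mono) auto
  also have "\<dots> = (t * (real k + 1)) ^ 3"
    by (simp add: power2_eq_square power3_eq_cube)
  also have "\<dots> \<le> 8 ^ 3"
    using tk assms(1) by (intro power_mono) auto
  finally show ?thesis
    by simp
qed

lemma decreasing_step_recurrence:
  fixes \<mu> c a a' :: real and n k :: nat
  assumes "0 \<le> a" "0 < \<mu>" "0 \<le> c" "1 \<le> n" "n \<le> k + 1"
    and g: "g = 4 * (2 * real k + 1) / (\<mu> * (real k + 1)\<^sup>2)"
    and rec: "a' \<le> (1 - \<mu> * real n * g / 4) * a + c * real n * g ^ 3"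
  shows "(real k + 1)\<^sup>2 * a' \<le> (real k)\<^sup>2 * a + 512 * c / \<mu> ^ 3"
proof -
  define t where "t = \<mu> * g"
  have t: "t * (real k + 1)\<^sup>2 = 4 * (2 * real k + 1)" and "0 \<le> t"
    using assms(2) by (simp_all add: t_def g)
  have "(real k + 1)\<^sup>2 * a' \<le> (real k + 1)\<^sup>2 * ((1 - \<mu> * real n * g / 4) * a + c * real n * g ^ 3)"
    using rec by (intro mult_left_mono) auto
  also have "\<dots> = ((real k + 1)\<^sup>2 * (1 - real n * t / 4)) * a
      + c / \<mu> ^ 3 * (real n * (t ^ 3 * (real k + 1)\<^sup>2))"
    using assms(2) by (simp add: t_def field_simps power3_eq_cube)
  also have "\<dots> \<le> (real k)\<^sup>2 * a + c / \<mu> ^ 3 * 512"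
    using decreasing_step_contraction[OF assms(4) t] decreasing_step_noise[OF \<open>0 \<le> t\<close> assms(5) t] assms
    by (intro add_mono mult_right_mono mult_left_mono) auto
  finally show ?thesis
    by (simp add: ac_simps)
qed

lemma constant_phase_le:
  fixes a :: "nat \<Rightarrow> real"
  assumes "0 < \<mu>" "0 < \<gamma>" "1 \<le> n" "\<mu> * real n * \<gamma> \<le> 4" "0 \<le> c" "1 \<le> k0"
    and rec: "\<And>k. k < k0 \<Longrightarrow> a (Suc k) \<le> (1 - \<mu> * real n * \<gamma> / 4) * a k + c * real n * \<gamma> ^ 3"
    and "0 \<le> a 0"
  shows "a k0 \<le> exp (- (\<mu> * real n * \<gamma> / 4)) * a 0 + 4 * c * \<gamma>\<^sup>2 / \<mu>"
proof -
  define q where "q = 1 - \<mu> * real n * \<gamma> / 4"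
  have q: "0 \<le> q" "q < 1"
    using assms(1-4) by (auto simp: q_def)
  have "a k0 \<le> q ^ k0 * a 0 + c * real n * \<gamma> ^ 3 / (1 - q)"
    using q assms(2,5) by (intro geometric_recurrence_le) (simp_all add: rec q_def)
  also have "\<dots> \<le> exp (- (\<mu> * real n * \<gamma> / 4)) * a 0 + c * real n * \<gamma> ^ 3 / (1 - q)"
  proof (intro add_right_mono mult_right_mono)
    have "q ^ k0 \<le> q ^ 1"
      using q assms(6) by (intro power_decreasing) auto
    also have "\<dots> \<le> exp (- (\<mu> * real n * \<gamma> / 4))"
      using exp_ge_add_one_self[of "- (\<mu> * real n * \<gamma> / 4)"] by (simp add: q_def)
    finally show "q ^ k0 \<le> exp (- (\<mu> * real n * \<gamma> / 4))" .
  qed (use assms in simp)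
  also have "c * real n * \<gamma> ^ 3 / (1 - q) = 4 * c * \<gamma>\<^sup>2 / \<mu>"
    using assms(1-3) by (simp add: q_def field_simps power2_eq_square power3_eq_cube)
  finally show ?thesis .
qed

lemma decreasing_phase_le:
  fixes a g :: "nat \<Rightarrow> real"
  assumes "0 < \<mu>" "0 \<le> c" "1 \<le> n" "n \<le> k0" "k0 \<le> M" "\<And>k. 0 \<le> a k"
    and g: "\<And>k. k0 \<le> k \<Longrightarrow> g k = 4 * (2 * real k + 1) / (\<mu> * (real k + 1)\<^sup>2)"
    and rec: "\<And>k. k0 \<le> k \<Longrightarrow> k < M \<Longrightarrow>
      a (Suc k) \<le> (1 - \<mu> * real n * g k / 4) * a k + c * real n * g k ^ 3"
  shows "(real M)\<^sup>2 * a M \<le> (real k0)\<^sup>2 * a k0 + (real M - real k0) * (512 * c / \<mu> ^ 3)"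
proof (rule weighted_telescoping_le)
  fix k assume "k0 \<le> k" "k < M"
  then show "(real k + 1)\<^sup>2 * a (Suc k) \<le> (real k)\<^sup>2 * a k + 512 * c / \<mu> ^ 3"
    using assms(1-4,6) by (intro decreasing_step_recurrence[OF _ _ _ _ _ g rec]) auto
qed (rule assms(5))

lemma two_phase_start_ge:
  assumes "0 < \<mu>" "0 < \<gamma>" "\<mu> * real n * \<gamma> \<le> 1" and k0: "k0 = nat \<lceil>64 / (\<mu>\<^sup>2 * \<gamma>\<^sup>2)\<rceil>"
  shows "n \<le> k0"
proof (cases "n = 0")
  case False
  define t where "t = \<mu> * \<gamma>"
  have t_pos: "0 < t"
    using assms by (simp add: t_def)
  have "t \<le> \<mu> * real n * \<gamma>"
    using assms(1,2) False by (simp add: t_def)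
  then have "t \<le> 1"
    using assms(3) by simp
  then have "1 / t \<le> 64 / t\<^sup>2"
    using t_pos by (simp add: field_simps power2_eq_square)
  moreover have "real n \<le> 1 / t"
    using assms(3) t_pos by (simp add: t_def field_simps)
  moreover have "64 / t\<^sup>2 \<le> real k0"
    using real_nat_ceiling_ge k0 by (simp add: t_def power_mult_distrib)
  ultimately show ?thesis
    by linarith
qed simp

lemma two_phase_recurrence_le:
  fixes a :: "nat \<Rightarrow> real" and n k0 K :: nat
  assumes "0 < \<mu>" "0 < \<gamma>" "1 \<le> n" "\<mu> * real n * \<gamma> \<le> 1" "0 \<le> c"
    and k0: "k0 = nat \<lceil>64 / (\<mu>\<^sup>2 * \<gamma>\<^sup>2)\<rceil>" and "k0 \<le> K"
    and a_nonneg: "\<And>k. 0 \<le> a k"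
    and rec: "\<And>k. k \<le> K \<Longrightarrow> a (Suc k) \<le> (1 - \<mu> * real n * two_phase_step \<mu> \<gamma> k0 k / 4) * a k
      + c * real n * two_phase_step \<mu> \<gamma> k0 k ^ 3"
  shows "a (Suc K) \<le> (real k0)\<^sup>2 * exp (- (\<mu> * real n * \<gamma> / 4)) / (real K + 1)\<^sup>2 * a 0
    + 4 * c / (\<mu> * (real K + 1)\<^sup>2) * (\<gamma>\<^sup>2 * (real k0)\<^sup>2 + 128 / \<mu>\<^sup>2 * real K)"
proof -
  define E where "E = exp (- (\<mu> * real n * \<gamma> / 4))"
  have n_le: "n \<le> k0"
    using two_phase_start_ge[OF assms(1,2,4) k0] .
  have "a (Suc k) \<le> (1 - \<mu> * real n * \<gamma> / 4) * a k + c * real n * \<gamma> ^ 3" if "k < k0" for k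
    using rec[of k] that assms(7) by (simp add: two_phase_step_def)
  then have "a k0 \<le> E * a 0 + 4 * c * \<gamma>\<^sup>2 / \<mu>"
    unfolding E_def using assms(1-5) n_le a_nonneg by (intro constant_phase_le) auto
  then have "(real k0)\<^sup>2 * a k0 \<le> (real k0)\<^sup>2 * (E * a 0 + 4 * c * \<gamma>\<^sup>2 / \<mu>)"
    by (rule mult_left_mono) simp
  moreover have "(real (Suc K))\<^sup>2 * a (Suc K)
      \<le> (real k0)\<^sup>2 * a k0 + (real (Suc K) - real k0) * (512 * c / \<mu> ^ 3)"
    by (rule decreasing_phase_le[where g = "two_phase_step \<mu> \<gamma> k0", OF _ _ _ n_le _ a_nonneg _ rec])
      (use assms(1,3,5,7) in \<open>auto simp: two_phase_step_def\<close>)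
  moreover have "(real (Suc K) - real k0) * (512 * c / \<mu> ^ 3) \<le> real K * (512 * c / \<mu> ^ 3)"
    using n_le assms(1,3,5) by (intro mult_right_mono) auto
  ultimately have "a (Suc K) * (real K + 1)\<^sup>2
      \<le> (real k0)\<^sup>2 * (E * a 0 + 4 * c * \<gamma>\<^sup>2 / \<mu>) + real K * (512 * c / \<mu> ^ 3)"
    by (simp add: algebra_simps)
  moreover have "((real k0)\<^sup>2 * (E * a 0 + 4 * c * \<gamma>\<^sup>2 / \<mu>) + real K * (512 * c / \<mu> ^ 3)) / D
      = (real k0)\<^sup>2 * E / D * a 0 + 4 * c / (\<mu> * D) * (\<gamma>\<^sup>2 * (real k0)\<^sup>2 + 128 / \<mu>\<^sup>2 * real K)"
    if "D \<noteq> 0" for D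
    using that assms(1) by (simp add: field_simps power2_eq_square power3_eq_cube)
  ultimately show ?thesis
    by (simp add: E_def pos_le_divide_eq flip: pos_le_divide_eq)
qed

lemma step_size_bounds:
  assumes "0 < \<mu>" "\<mu> \<le> L" "1 \<le> n"
    and \<gamma>: "\<gamma> = \<mu> / (10 * L\<^sup>2 * sqrt (10 * real n ^ 2 + 2 * real n + 54))"
  shows "0 < \<gamma>" "real n * \<gamma> * L\<^sup>2 \<le> \<mu> / 30" "real n * \<gamma> * L \<le> 1 / 30"
proof -
  define s where "s = sqrt (10 * real n ^ 2 + 2 * real n + 54)"
  have s: "3 * real n \<le> s"
    unfolding s_def by (rule real_le_rsqrt) (simp add: power2_eq_square)
  have L: "0 < L"
    using assms by simp
  have s_pos: "0 < s"
    using s assms(3) by linarith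
  show "0 < \<gamma>"
    unfolding \<gamma>[folded s_def] using assms(1) s_pos L by simp
  have "real n * \<gamma> * L\<^sup>2 = \<mu> * real n / (10 * s)"
    unfolding \<gamma>[folded s_def] using L by (simp add: field_simps)
  also have "\<dots> \<le> \<mu> * real n / (10 * (3 * real n))"
    using s assms by (intro divide_left_mono mult_left_mono) auto
  also have "\<dots> = \<mu> / 30"
    using assms(3) by simp
  finally show sq: "real n * \<gamma> * L\<^sup>2 \<le> \<mu> / 30" .
  have "(real n * \<gamma> * L) * L \<le> 1 / 30 * L"
    using sq assms(2) by (simp add: power2_eq_square mult.assoc)
  then show "real n * \<gamma> * L \<le> 1 / 30"
    using L by simp
qed

lemma lipschitz_on_le_Max:
  fixes n :: nat
  assumes "\<And>i. i < n \<Longrightarrow> (L i)-lipschitz_on UNIV (Fs i)" "i < n"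
  shows "dist (Fs i x) (Fs i y) \<le> Max (L ` {..<n}) * dist x y"
proof -
  have "L i \<le> Max (L ` {..<n})"
    using assms(2) by (intro Max_ge) auto
  then show ?thesis
    using lipschitz_onD[OF assms(1)[OF assms(2)], of x y] by (smt (verit) UNIV_I mult_right_mono zero_le_dist)
qed

context seg_rr_problem
begin

lemma expect_seg_rr_two_phase_le:
  assumes "0 < \<gamma>" "real n * \<gamma> * L \<le> 1 / 20" "real n * \<gamma> * L\<^sup>2 \<le> \<mu> / 10"
    and k0: "k0 = nat \<lceil>64 / (\<mu>\<^sup>2 * \<gamma>\<^sup>2)\<rceil>" "k0 \<le> K"
    and g1: "g1 = two_phase_step \<mu> \<gamma> k0" and g2: "\<And>k. g2 k = 2 * g1 k"
  shows "expect_perms n K (\<lambda>ps. (norm (seg_rr n Fs g1 g2 ps z0 (Suc K) - zs))\<^sup>2)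
    \<le> (real k0)\<^sup>2 * exp (- (\<mu> * real n * \<gamma> / 4)) / (real K + 1)\<^sup>2 * (norm (z0 - zs))\<^sup>2
      + 96 * L\<^sup>2 * (29 + real n) * ((1 / real n) * (\<Sum>i<n. (norm (Fs i zs))\<^sup>2)) / (\<mu>\<^sup>2 * (real K + 1)\<^sup>2)
        * (\<gamma>\<^sup>2 * (real k0)\<^sup>2 + 128 / \<mu>\<^sup>2 * real K)"
proof -
  interpret seg_rr_epoch n Fs F L \<mu> zs \<gamma>
    by unfold_locales (rule assms)+
  define c where "c = 24 * (29 + real n) * L\<^sup>2 * ((1 / real n) * (\<Sum>i<n. (norm (Fs i zs))\<^sup>2)) / \<mu>"
  define a where "a k = expect_perms n K (\<lambda>ps. (norm (seg_rr n Fs g1 g2 ps z0 k - zs))\<^sup>2)" for k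
  have c_nonneg: "0 \<le> c"
    unfolding c_def using mu_pos n_pos by (intro divide_nonneg_pos mult_nonneg_nonneg sum_nonneg) auto
  have g1_le: "0 < g1 k" "g1 k \<le> \<gamma>" for k
    unfolding g1 using mu_pos gamma_pos mu_gamma_le
    by (auto intro!: two_phase_step_pos two_phase_step_le[OF _ _ _ k0(1)])
  have "a (Suc K) \<le> (real k0)\<^sup>2 * exp (- (\<mu> * real n * \<gamma> / 4)) / (real K + 1)\<^sup>2 * a 0
      + 4 * c / (\<mu> * (real K + 1)\<^sup>2) * (\<gamma>\<^sup>2 * (real k0)\<^sup>2 + 128 / \<mu>\<^sup>2 * real K)"
  proof (rule two_phase_recurrence_le[OF mu_pos gamma_pos n_pos _ _ k0])
    fix k assume "k \<le> K"
    have "real n * g1 k * L \<le> real n * \<gamma> * L" "real n * g1 k * L\<^sup>2 \<le> real n * \<gamma> * L\<^sup>2"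
      using g1_le[of k] L_pos by (auto intro!: mult_right_mono mult_left_mono)
    then have "a (Suc k) \<le> (1 - \<mu> * real n * g1 k / 4) * a k
        + 24 * real n * (29 + real n) * g1 k ^ 3 * L\<^sup>2 * ((1 / real n) * (\<Sum>i<n. (norm (Fs i zs))\<^sup>2)) / \<mu>"
      unfolding a_def using step_L step_L_sq
      by (intro expect_seg_rr_Suc_le \<open>k \<le> K\<close> g2 g1_le(1)) auto
    then show "a (Suc k) \<le> (1 - \<mu> * real n * two_phase_step \<mu> \<gamma> k0 k / 4) * a k
        + c * real n * two_phase_step \<mu> \<gamma> k0 k ^ 3"
      using n_pos by (simp add: c_def g1 algebra_simps)
  qed (use mu_step_le c_nonneg in \<open>auto simp: a_def intro!: expect_perms_nonneg\<close>)
  moreover have "4 * c / (\<mu> * (real K + 1)\<^sup>2)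
      = 96 * L\<^sup>2 * (29 + real n) * ((1 / real n) * (\<Sum>i<n. (norm (Fs i zs))\<^sup>2)) / (\<mu>\<^sup>2 * (real K + 1)\<^sup>2)"
    using mu_pos by (simp add: c_def field_simps power2_eq_square)
  ultimately show ?thesis
    by (simp add: a_def expect_perms_const)
qed

end

theorem theorem4:
  fixes n :: nat and Fs :: "nat \<Rightarrow> 'a::euclidean_space \<Rightarrow> 'a" and F :: "'a \<Rightarrow> 'a"
    and L :: "nat \<Rightarrow> real" and \<mu> :: real and zs z0 :: 'a
    and Lmax \<sigma>sq g1max :: real and kstar :: nat
    and g1 g2 :: "nat \<Rightarrow> real" and K :: nat
  assumes n_pos: "n \<ge> 1"
    and F_def: "\<And>z. F z = (1 / real n) *\<^sub>R (\<Sum>i<n. Fs i z)"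
    and mu_pos: "\<mu> > 0"
    and strongly_monotone: "\<And>z1 z2. inner (F z1 - F z2) (z1 - z2) \<ge> \<mu> * (norm (z1 - z2))\<^sup>2"
    and lipschitz: "\<And>i. i < n \<Longrightarrow> (L i)-lipschitz_on UNIV (Fs i)"
    and sol: "F zs = 0"
    and Lmax_def: "Lmax = Max (L ` {..<n})"
    and sigma_def: "\<sigma>sq = (1 / real n) * (\<Sum>i<n. (norm (Fs i zs))\<^sup>2)"
    and g1max_def: "g1max = \<mu> / (10 * Lmax\<^sup>2 * sqrt (10 * real n ^ 2 + 2 * real n + 54))"
    and kstar_def: "kstar = nat \<lceil>64 / (\<mu>\<^sup>2 * g1max\<^sup>2)\<rceil>"
    and g1_def: "\<And>k. g1 k = (if k < kstar then g1max
                      else 4 * (2 * real k + 1) / (\<mu> * (real k + 1)\<^sup>2))"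
    and g2_def: "\<And>k. g2 k = 2 * g1 k"
    and K_ge: "K \<ge> kstar"
  shows "expect_perms n K (\<lambda>ps. (norm (seg_rr n Fs g1 g2 ps z0 (Suc K) - zs))\<^sup>2)
    \<le> (real kstar)\<^sup>2 * exp (- (\<mu> * real n * g1max / 4)) / (real K + 1)\<^sup>2 * (norm (z0 - zs))\<^sup>2
       + 96 * Lmax\<^sup>2 * (29 + real n) * \<sigma>sq / (\<mu>\<^sup>2 * (real K + 1)\<^sup>2)
         * (g1max\<^sup>2 * (real kstar)\<^sup>2 + 128 / \<mu>\<^sup>2 * real K)"
proof -
  interpret seg_rr_problem n Fs F Lmax \<mu> zs
    using n_pos F_def strongly_monotone sol mu_pos lipschitz_on_le_Max[OF lipschitz]
    by unfold_locales (auto simp: Lmax_def dist_norm)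
  note g1max = step_size_bounds[OF mu_pos mu_le_L n_pos g1max_def]
  have "g1 = two_phase_step \<mu> g1max kstar"
    by (rule ext) (simp add: g1_def two_phase_step_def)
  then show ?thesis
    unfolding sigma_def using g1max g2_def mu_pos
    by (intro expect_seg_rr_two_phase_le[OF g1max(1) _ _ kstar_def K_ge]) auto
qed

end
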